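(* Let $T=\begin{pmatrix}2^{-1/2}&0.7\\0&2^{-1/2}\end{pmatrix}$, $\mathbf{b}=\begin{pmatrix}1\\1\end{pmatrix}$, $\mathbf{p}=(-2.10,0.20)$, $\mathbf{q}=(4.90,2.45)$. Let $U$ be the open parallelogram with vertices $\pm\mathbf{p},\pm\mathbf{q}$ and $V$ the open parallelogram with vertices $\pm0.95\mathbf{p},\pm0.95\mathbf{q}$. Then \[ \mathbf{v}=T^{-1}\mathbf{b}-T^{-2}\mathbf{b}-T^{-3}\mathbf{b}-T^{-4}\mathbf{b}+T^{-5}\mathbf{b}\in V, \] and \[ U\subset\bigcup_{u\in\{-1,0,1\}^5}(T+u_1\mathbf{b})\circ\cdots\circ(T+u_5\mathbf{b})(V), \] where $T+c\,\mathbf{b}$ denotes the affine map $\mathbf{x}\mapsto T\mathbf{x}+c\,\mathbf{b}$. *)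

theory Defs
  imports "HOL-Analysis.Analysis"
begin

definition Tmat :: "real^2^2" where
  "Tmat = vector [vector [1 / sqrt 2, 0.7], vector [0, 1 / sqrt 2]]"

definition bvec :: "real^2" where "bvec = vector [1, 1]"
definition pvec :: "real^2" where "pvec = vector [-2.10, 0.20]"
definition qvec :: "real^2" where "qvec = vector [4.90, 2.45]"

definition Uset :: "(real^2) set" where
  "Uset = interior (convex hull {pvec, qvec, - pvec, - qvec})"

definition Vset :: "(real^2) set" where
  "Vset = interior (convex hull {0.95 *\<^sub>R pvec, 0.95 *\<^sub>R qvec,
                                 - (0.95 *\<^sub>R pvec), - (0.95 *\<^sub>R qvec)})"

definition affT :: "real \<Rightarrow> real^2 \<Rightarrow> real^2" where
  "affT c x = Tmat *v x + c *\<^sub>R bvec"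

definition Tinv_pow :: "nat \<Rightarrow> real^2 \<Rightarrow> real^2" where
  "Tinv_pow k x = (((*v) (matrix_inv Tmat)) ^^ k) x"

end

theory Submission
  imports Defs
begin

(* In the linear coordinates (s, d) in which U and V are the open squares max(|s|, |d|) < 1
   and < 0.95, the inverse of (T + u1 b) o ... o (T + u5 b) becomes w |-> M w - tau(u), with
   M the matrix of T^-5. The covering claim therefore says that the 243 squares of radius 0.95
   centred at the points tau(u) cover the parallelogram M [-1,1]^2. This is checked by a
   bisection tree over a box containing that parallelogram: every leaf box either lies in one
   of the squares or is cut off from the parallelogram by the line through one of its edges.
   All quantities lie in Z[sqrt 2], and signs of a + b sqrt 2 are decided exactly using
   rational bounds on sqrt 2. *)

lemma matrix_inv_eqI:
  fixes A :: "'a::semiring_1^'n^'m" and B :: "'a^'m^'n"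
  assumes "A ** B = mat 1" and "B ** A = mat 1"
  shows "matrix_inv A = B"
proof -
  have inv: "A ** matrix_inv A = mat 1 \<and> matrix_inv A ** A = mat 1"
    unfolding matrix_inv_def by (rule someI[of _ B]) (use assms in blast)
  have "matrix_inv A = (B ** A) ** matrix_inv A"
    using assms(2) by simp
  also have "\<dots> = B"
    using inv by (simp flip: matrix_mul_assoc)
  finally show ?thesis .
qed

lemma abs_lincomb_le:
  fixes a b s d :: "'a::linordered_idom"
  assumes "\<bar>s\<bar> \<le> 1" and "\<bar>d\<bar> \<le> 1"
  shows "\<bar>a * s + b * d\<bar> \<le> \<bar>a\<bar> + \<bar>b\<bar>"
proof -
  have "\<bar>a * s + b * d\<bar> \<le> \<bar>a\<bar> * \<bar>s\<bar> + \<bar>b\<bar> * \<bar>d\<bar>"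
    by (metis abs_mult abs_triangle_ineq)
  also have "\<dots> \<le> \<bar>a\<bar> + \<bar>b\<bar>"
    using assms by (intro add_mono mult_left_le) auto
  finally show ?thesis .
qed

lemma affine_neg_on_box:
  fixes a b c x y :: "'a::linordered_ring"
  assumes "c + a * x0 + b * y0 < 0" "c + a * x0 + b * y1 < 0"
    "c + a * x1 + b * y0 < 0" "c + a * x1 + b * y1 < 0"
    and "x0 \<le> x" "x \<le> x1" "y0 \<le> y" "y \<le> y1"
  shows "c + a * x + b * y < 0"
proof -
  obtain x' where x': "x' \<in> {x0, x1}" "a * x \<le> a * x'"
  proof (cases "0 \<le> a")
    case True
    then show ?thesis using that[of x1] assms by (simp add: mult_left_mono)
  next
    case False
    then show ?thesis using that[of x0] assms by (simp add: mult_left_mono_neg)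
  qed
  obtain y' where y': "y' \<in> {y0, y1}" "b * y \<le> b * y'"
  proof (cases "0 \<le> b")
    case True
    then show ?thesis using that[of y1] assms by (simp add: mult_left_mono)
  next
    case False
    then show ?thesis using that[of y0] assms by (simp add: mult_left_mono_neg)
  qed
  have "c + a * x + b * y \<le> c + a * x' + b * y'"
    using x' y' by (simp add: add_mono)
  also have "\<dots> < 0"
    using x' y' assms(1-4) by auto
  finally show ?thesis .
qed

section \<open>Exact sign tests in \<open>\<int>[\<surd>2]\<close>\<close>

lemma sqrt2_bounds: "1.4142135623 < sqrt 2" "sqrt 2 < 1.4142135624"
proof -
  show "1.4142135623 < sqrt 2"
    by (rule real_less_rsqrt) (simp add: power2_eq_square)
  have "sqrt 2 < sqrt (1.4142135624\<^sup>2)"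
    by (rule real_sqrt_less_mono) (simp add: power2_eq_square)
  then show "sqrt 2 < 1.4142135624"
    by simp
qed

lemma sqrt2_mult_sqrt2: "sqrt 2 * (sqrt 2 * x) = 2 * x"
  by (simp flip: mult.assoc)

fun of_zsqrt2 :: "int \<times> int \<Rightarrow> real" where
  "of_zsqrt2 (a, b) = of_int a + of_int b * sqrt 2"

fun neg_certified :: "int \<times> int \<Rightarrow> bool" where
  "neg_certified (a, b) =
    (if 0 \<le> b then 10000000000 * a + 14142135624 * b < 0
     else 10000000000 * a + 14142135623 * b < 0)"

lemma neg_certified_sound:
  assumes "neg_certified z"
  shows "of_zsqrt2 z < 0"
proof (cases z)
  case (Pair a b)
  show ?thesis
  proof (cases "0 \<le> b")
    case True
    then have "10000000000 * a + 14142135624 * b < 0"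
      using assms by (simp add: Pair)
    moreover have "of_int b * sqrt 2 \<le> of_int b * 1.4142135624"
      using True sqrt2_bounds by (intro mult_left_mono) auto
    ultimately show ?thesis
      by (simp add: Pair)
  next
    case False
    then have "10000000000 * a + 14142135623 * b < 0"
      using assms by (simp add: Pair)
    moreover have "of_int b * sqrt 2 \<le> of_int b * 1.4142135623"
      using False sqrt2_bounds by (intro mult_left_mono_neg) auto
    ultimately show ?thesis
      by (simp add: Pair)
  qed
qed

section \<open>Coordinates in which the parallelograms are squares\<close>

definition max_norm :: "real \<times> real \<Rightarrow> real" where
  "max_norm z = max \<bar>fst z\<bar> \<bar>snd z\<bar>"

text \<open>Coordinates with respect to the basis \<open>(p + q) / 2, (p - q) / 2\<close>.\<close>
definition pq_coords :: "real^2 \<Rightarrow> real \<times> real" where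
  "pq_coords x = ((-18 * x$1 + 56 * x$2) / 49, (-106 * x$1 + 112 * x$2) / 245)"

lemma linear_pq_coords: "linear pq_coords"
  by (rule linearI) (simp_all add: pq_coords_def field_simps)

lemma pq_coords_vertices: "pq_coords pvec = (1, 1)" "pq_coords qvec = (1, -1)"
  by (simp_all add: pq_coords_def pvec_def qvec_def)

lemma pq_coords_inverse:
  assumes "pq_coords x = (s, d)"
  shows "x = (s / 2) *\<^sub>R (pvec + qvec) + (d / 2) *\<^sub>R (pvec - qvec)"
  using assms by (auto simp: pq_coords_def pvec_def qvec_def vec_eq_iff forall_2 field_simps)

lemma pq_square_subset_convex_hull:
  assumes "0 < c"
  shows "{x. max_norm (pq_coords x) \<le> c}
    \<subseteq> convex hull {c *\<^sub>R pvec, c *\<^sub>R qvec, - (c *\<^sub>R pvec), - (c *\<^sub>R qvec)}" (is "_ \<subseteq> ?H")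
proof
  fix x assume "x \<in> {x. max_norm (pq_coords x) \<le> c}"
  then obtain s d where sd: "pq_coords x = (s, d)" "\<bar>s\<bar> \<le> c" "\<bar>d\<bar> \<le> c"
    by (cases "pq_coords x") (auto simp: max_norm_def)
  define s' d' where "s' = s / c" and "d' = d / c"
  have s'd': "\<bar>s'\<bar> \<le> 1" "\<bar>d'\<bar> \<le> 1"
    using sd assms by (simp_all add: s'_def d'_def abs_divide)
  have vertices: "c *\<^sub>R pvec \<in> ?H" "c *\<^sub>R qvec \<in> ?H" "- (c *\<^sub>R pvec) \<in> ?H" "- (c *\<^sub>R qvec) \<in> ?H"
    by (rule hull_inc, simp)+
  have weights: "0 \<le> (1 + t) / 2" "0 \<le> (1 - t) / 2" "(1 + t) / 2 + (1 - t) / 2 = 1"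
    if "\<bar>t\<bar> \<le> 1" for t :: real
    using that by (simp_all add: abs_le_iff field_simps)
  define X1 where "X1 = ((1 + d') / 2) *\<^sub>R (c *\<^sub>R pvec) + ((1 - d') / 2) *\<^sub>R (c *\<^sub>R qvec)"
  define X2 where "X2 = ((1 + d') / 2) *\<^sub>R - (c *\<^sub>R qvec) + ((1 - d') / 2) *\<^sub>R - (c *\<^sub>R pvec)"
  have "X1 \<in> ?H" "X2 \<in> ?H"
    unfolding X1_def X2_def
    by (rule convexD[OF convex_convex_hull vertices(1,2) weights[OF s'd'(2)]]
             convexD[OF convex_convex_hull vertices(4,3) weights[OF s'd'(2)]])+
  then have "((1 + s') / 2) *\<^sub>R X1 + ((1 - s') / 2) *\<^sub>R X2 \<in> ?H"
    by (rule convexD[OF convex_convex_hull _ _ weights[OF s'd'(1)]])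
  moreover have "((1 + s') / 2) *\<^sub>R X1 + ((1 - s') / 2) *\<^sub>R X2 = x"
    unfolding pq_coords_inverse[OF sd(1)] X1_def X2_def s'_def d'_def using assms
    by (simp add: pvec_def qvec_def vec_eq_iff forall_2 field_simps)
  ultimately show "x \<in> ?H"
    by simp
qed

lemma convex_hull_pq_parallelogram:
  assumes "0 < c"
  shows "convex hull {c *\<^sub>R pvec, c *\<^sub>R qvec, - (c *\<^sub>R pvec), - (c *\<^sub>R qvec)}
    = {x. max_norm (pq_coords x) \<le> c}" (is "convex hull ?P = ?B")
proof
  have "?B = pq_coords -` ({-c..c} \<times> {-c..c})"
    by (auto simp: max_norm_def abs_le_iff mem_Times_iff)
  then have "convex ?B"
    by (simp add: convex_linear_vimage linear_pq_coords convex_Times)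
  moreover have "?P \<subseteq> ?B"
    using assms linear_pq_coords
    by (simp add: linear_cmul linear_neg pq_coords_vertices max_norm_def)
  ultimately show "convex hull ?P \<subseteq> ?B"
    by (rule hull_minimal[rotated])
  show "?B \<subseteq> convex hull ?P"
    using assms by (rule pq_square_subset_convex_hull)
qed

lemma Uset_subset_pq_square: "Uset \<subseteq> {x. max_norm (pq_coords x) \<le> 1}"
  using convex_hull_pq_parallelogram[of 1] interior_subset unfolding Uset_def by auto

lemma pq_square_subset_Vset: "{x. max_norm (pq_coords x) < 0.95} \<subseteq> Vset"
  unfolding Vset_def
proof (rule interior_maximal)
  show "{x. max_norm (pq_coords x) < 0.95}
      \<subseteq> convex hull {0.95 *\<^sub>R pvec, 0.95 *\<^sub>R qvec, - (0.95 *\<^sub>R pvec), - (0.95 *\<^sub>R qvec)}"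
    by (subst convex_hull_pq_parallelogram) auto
  show "open {x. max_norm (pq_coords x) < 0.95}"
    unfolding max_norm_def pq_coords_def by (intro open_Collect_less continuous_intros) auto
qed

section \<open>The inverse branches\<close>

definition Tinv :: "real^2^2" where
  "Tinv = vector [vector [sqrt 2, - 1.4], vector [0, sqrt 2]]"

lemma Tinv_mult_vector: "Tinv *v z = vector [sqrt 2 * z$1 - 1.4 * z$2, sqrt 2 * z$2]"
  by (simp add: Tinv_def vec_eq_iff forall_2 matrix_vector_mult_def sum_2)

lemma Tmat_Tinv_inverse: "Tmat ** Tinv = mat 1" "Tinv ** Tmat = mat 1"
  by (simp_all add: Tmat_def Tinv_def vec_eq_iff forall_2 matrix_matrix_mult_def sum_2 mat_def
      field_simps)

lemma matrix_inv_Tmat: "matrix_inv Tmat = Tinv"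
  by (rule matrix_inv_eqI[OF Tmat_Tinv_inverse])

lemma Tinv_pow_eq: "Tinv_pow k x = ((*v) Tinv ^^ k) x"
  by (simp add: Tinv_pow_def matrix_inv_Tmat)

definition affT_inv :: "real \<Rightarrow> real^2 \<Rightarrow> real^2" where
  "affT_inv c z = Tinv *v (z - c *\<^sub>R bvec)"

lemma affT_affT_inv: "affT c (affT_inv c z) = z"
  by (simp add: affT_def affT_inv_def matrix_vector_mul_assoc Tmat_Tinv_inverse)

type_synonym digits = "int \<times> int \<times> int \<times> int \<times> int"

fun inv_branch :: "digits \<Rightarrow> real^2 \<Rightarrow> real^2" where
  "inv_branch (u1, u2, u3, u4, u5) =
    affT_inv u5 \<circ> affT_inv u4 \<circ> affT_inv u3 \<circ> affT_inv u2 \<circ> affT_inv u1"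

lemma affT_comp_inv_branch:
  "(affT u1 \<circ> affT u2 \<circ> affT u3 \<circ> affT u4 \<circ> affT u5) (inv_branch (u1, u2, u3, u4, u5) x) = x"
  by (simp add: affT_affT_inv)

text \<open>The matrix of \<open>T\<^sup>-\<^sup>5\<close> in the coordinates \<^const>\<open>pq_coords\<close>.\<close>
definition Tinv5_pq :: "real \<times> real \<Rightarrow> real \<times> real" where
  "Tinv5_pq w = ((477/35 + 4 * sqrt 2) * fst w - 81/7 * snd w,
                 2809/175 * fst w + (4 * sqrt 2 - 477/35) * snd w)"

text \<open>\<open>tau u\<close> is \<^const>\<open>pq_coords\<close> of \<open>u\<^sub>1 T\<^sup>-\<^sup>5 b + u\<^sub>2 T\<^sup>-\<^sup>4 b + \<dots> + u\<^sub>5 T\<^sup>-\<^sup>1 b\<close>;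
  its coordinates are written as \<open>(a + a' \<surd>2) / 4900\<close>.\<close>
fun tau_s_num :: "digits \<Rightarrow> int \<times> int" where
  "tau_s_num (u1, u2, u3, u4, u5) =
    (50400 * u1 + 15200 * u2 + 15120 * u3 + 7600 * u4 + 2520 * u5,
     15200 * u1 + 20160 * u2 + 7600 * u3 + 5040 * u4 + 3800 * u5)"

fun tau_d_num :: "digits \<Rightarrow> int \<times> int" where
  "tau_d_num (u1, u2, u3, u4, u5) =
    (59360 * u1 + 480 * u2 + 17808 * u3 + 240 * u4 + 2968 * u5,
     480 * u1 + 23744 * u2 + 240 * u3 + 5936 * u4 + 120 * u5)"

definition tau :: "digits \<Rightarrow> real \<times> real" where
  "tau u = (of_zsqrt2 (tau_s_num u) / 4900, of_zsqrt2 (tau_d_num u) / 4900)"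

lemma pq_coords_inv_branch: "pq_coords (inv_branch u x) = Tinv5_pq (pq_coords x) - tau u"
  by (cases u) (simp add: pq_coords_def Tinv5_pq_def tau_def affT_inv_def
      Tinv_mult_vector bvec_def sqrt2_mult_sqrt2 field_simps)

lemma Tinv5_pq_bounds:
  assumes "max_norm w \<le> 1"
  shows "Tinv5_pq w \<in> {-31..31} \<times> {-25..25}"
proof -
  obtain s d where w: "w = (s, d)" and sd: "\<bar>s\<bar> \<le> 1" "\<bar>d\<bar> \<le> 1"
    using assms by (cases w) (auto simp: max_norm_def)
  have "\<bar>(477/35 + 4 * sqrt 2) * s + (- 81/7) * d\<bar> \<le> \<bar>477/35 + 4 * sqrt 2\<bar> + \<bar>- 81/7\<bar>"
    "\<bar>2809/175 * s + (4 * sqrt 2 - 477/35) * d\<bar> \<le> \<bar>2809/175\<bar> + \<bar>4 * sqrt 2 - 477/35\<bar>"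
    using sd by (rule abs_lincomb_le)+
  moreover have "\<bar>477/35 + 4 * sqrt 2\<bar> + \<bar>- 81/7\<bar> \<le> 31"
    "\<bar>2809/175\<bar> + \<bar>4 * sqrt 2 - 477/35\<bar> \<le> (25 :: real)"
    using sqrt2_bounds by auto
  ultimately show ?thesis
    by (simp add: w Tinv5_pq_def abs_le_iff)
qed

section \<open>A certified covering by bisection\<close>

text \<open>\<open>((c, c'), (a, a'), (b, b'))\<close> encodes the affine function
  \<open>(x, y) \<mapsto> (c + c' \<surd>2) + (a + a' \<surd>2) x + (b + b' \<surd>2) y\<close>.\<close>
type_synonym affine_form = "(int \<times> int) \<times> (int \<times> int) \<times> (int \<times> int)"

fun form_eval :: "affine_form \<Rightarrow> real \<times> real \<Rightarrow> real" where
  "form_eval (c, a, b) (x, y) = of_zsqrt2 c + of_zsqrt2 a * x + of_zsqrt2 b * y"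

fun form_at_grid :: "affine_form \<Rightarrow> int \<times> int \<Rightarrow> int \<times> int" where
  "form_at_grid ((c, c'), (a, a'), (b, b')) (i, j) =
    (1024 * c + a * i + b * j, 1024 * c' + a' * i + b' * j)"

lemma of_zsqrt2_form_at_grid:
  "of_zsqrt2 (form_at_grid f (i, j)) = 1024 * form_eval f (of_int i / 1024, of_int j / 1024)"
  by (cases f) (auto simp: algebra_simps)

definition grid_box :: "int \<Rightarrow> int \<Rightarrow> int \<Rightarrow> int \<Rightarrow> (real \<times> real) set" where
  "grid_box i0 i1 j0 j1 =
    {of_int i0 / 1024 .. of_int i1 / 1024} \<times> {of_int j0 / 1024 .. of_int j1 / 1024}"

lemma grid_box_split:
  "grid_box i0 i1 j0 j1 \<subseteq> grid_box i0 m j0 j1 \<union> grid_box m i1 j0 j1"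
  "grid_box i0 i1 j0 j1 \<subseteq> grid_box i0 i1 j0 m \<union> grid_box i0 i1 m j1"
  by (auto simp: grid_box_def)

definition neg_on_box :: "affine_form \<Rightarrow> int \<Rightarrow> int \<Rightarrow> int \<Rightarrow> int \<Rightarrow> bool" where
  "neg_on_box f i0 i1 j0 j1 =
    list_all (\<lambda>ij. neg_certified (form_at_grid f ij)) [(i0, j0), (i0, j1), (i1, j0), (i1, j1)]"

lemma neg_on_box_sound:
  assumes "neg_on_box f i0 i1 j0 j1" and "z \<in> grid_box i0 i1 j0 j1"
  shows "form_eval f z < 0"
proof -
  obtain c a b x y where f: "f = (c, a, b)" and z: "z = (x, y)"
    by (cases f, cases z) auto
  have corner: "of_zsqrt2 c + of_zsqrt2 a * (of_int i / 1024) + of_zsqrt2 b * (of_int j / 1024) < 0"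
    if "(i, j) \<in> set [(i0, j0), (i0, j1), (i1, j0), (i1, j1)]" for i j
  proof -
    have "neg_certified (form_at_grid f (i, j))"
      using that assms(1) unfolding neg_on_box_def list_all_iff by blast
    then have "of_zsqrt2 (form_at_grid f (i, j)) < 0"
      by (rule neg_certified_sound)
    then show ?thesis
      unfolding of_zsqrt2_form_at_grid f by simp
  qed
  have box: "of_int i0 / 1024 \<le> x" "x \<le> of_int i1 / 1024" "of_int j0 / 1024 \<le> y" "y \<le> of_int j1 / 1024"
    using assms(2) by (simp_all add: z grid_box_def)
  have "of_zsqrt2 c + of_zsqrt2 a * x + of_zsqrt2 b * y < 0"
    by (rule affine_neg_on_box[OF _ _ _ _ box]; rule corner; simp)
  then show ?thesis
    by (simp add: f z)
qed

fun digits_ok :: "digits \<Rightarrow> bool" where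
  "digits_ok (u1, u2, u3, u4, u5) = list_all (\<lambda>u. \<bar>u\<bar> \<le> 1) [u1, u2, u3, u4, u5]"

definition covered :: "real \<times> real \<Rightarrow> bool" where
  "covered z \<longleftrightarrow> (\<exists>u. digits_ok u \<and> max_norm (z - tau u) < 0.95)"

text \<open>These forms are all negative exactly on the open square of radius \<open>0.95 = 4655 / 4900\<close>
  about \<open>tau u\<close>.\<close>
definition target_forms :: "digits \<Rightarrow> affine_form list" where
  "target_forms u = (case (tau_s_num u, tau_d_num u) of ((a, a'), (b, b')) \<Rightarrow>
     [((- a - 4655, - a'), (4900, 0), (0, 0)), ((a - 4655, a'), (- 4900, 0), (0, 0)),
      ((- b - 4655, - b'), (0, 0), (4900, 0)), ((b - 4655, b'), (0, 0), (- 4900, 0))])"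

lemma target_forms_neg:
  assumes "list_all (\<lambda>f. form_eval f z < 0) (target_forms u)"
  shows "max_norm (z - tau u) < 0.95"
proof -
  obtain a a' b b' x y where "tau_s_num u = (a, a')" "tau_d_num u = (b, b')" "z = (x, y)"
    by (metis prod.exhaust)
  then show ?thesis
    using assms unfolding max_norm_def max_less_iff_conj abs_less_iff
    by (auto simp: target_forms_def tau_def field_simps)
qed

text \<open>At \<open>Tinv5_pq (s, d)\<close> these forms take the values \<open>1120 (1 - s)\<close>, \<open>1120 (1 + s)\<close>,
  \<open>5600 (1 - d)\<close> and \<open>5600 (1 + d)\<close>.\<close>
definition image_forms :: "affine_form list" where
  "image_forms =
    [((1120, 0), (477, -140), (-405, 0)), ((1120, 0), (-477, 140), (405, 0)),
     ((5600, 0), (2809, 0), (-2385, -700)), ((5600, 0), (-2809, 0), (2385, 700))]"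

lemma image_forms_nonneg:
  assumes "max_norm w \<le> 1" and "f \<in> set image_forms"
  shows "0 \<le> form_eval f (Tinv5_pq w)"
proof -
  obtain s d where "w = (s, d)"
    by (cases w)
  then show ?thesis
    using assms by (auto simp: image_forms_def Tinv5_pq_def max_norm_def abs_le_iff
        sqrt2_mult_sqrt2 algebra_simps)
qed

datatype cover_tree = Digits digits | Outside | Split cover_tree cover_tree

fun cover_check :: "cover_tree \<Rightarrow> int \<Rightarrow> int \<Rightarrow> int \<Rightarrow> int \<Rightarrow> bool" where
  "cover_check (Digits u) i0 i1 j0 j1 \<longleftrightarrow>
    digits_ok u \<and> list_all (\<lambda>f. neg_on_box f i0 i1 j0 j1) (target_forms u)"
| "cover_check Outside i0 i1 j0 j1 \<longleftrightarrow> list_ex (\<lambda>f. neg_on_box f i0 i1 j0 j1) image_forms"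
| "cover_check (Split l r) i0 i1 j0 j1 \<longleftrightarrow>
    (if j1 - j0 \<le> i1 - i0
     then cover_check l i0 ((i0 + i1) div 2) j0 j1 \<and> cover_check r ((i0 + i1) div 2) i1 j0 j1
     else cover_check l i0 i1 j0 ((j0 + j1) div 2) \<and> cover_check r i0 i1 ((j0 + j1) div 2) j1)"

lemma cover_check_sound:
  assumes "cover_check t i0 i1 j0 j1" and "Tinv5_pq w \<in> grid_box i0 i1 j0 j1"
    and "max_norm w \<le> 1"
  shows "covered (Tinv5_pq w)"
  using assms(1,2)
proof (induction t arbitrary: i0 i1 j0 j1)
  case (Digits u)
  have "max_norm (Tinv5_pq w - tau u) < 0.95"
    using Digits neg_on_box_sound unfolding cover_check.simps list_all_iff
    by (blast intro: target_forms_neg[unfolded list_all_iff])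
  then show ?case
    using Digits.prems unfolding covered_def by (intro exI[of _ u]) simp
next
  case Outside
  then obtain f where "f \<in> set image_forms" "form_eval f (Tinv5_pq w) < 0"
    using neg_on_box_sound unfolding cover_check.simps list_ex_iff by blast
  then show ?case
    using image_forms_nonneg[OF assms(3)] by fastforce
next
  case (Split l r)
  show ?case
  proof (cases "j1 - j0 \<le> i1 - i0")
    case True
    then show ?thesis
      using Split grid_box_split(1)[of i0 i1 j0 j1 "(i0 + i1) div 2"] by auto
  next
    case False
    then show ?thesis
      using Split grid_box_split(2)[of i0 i1 j0 j1 "(j0 + j1) div 2"] by auto
  qed
qed

definition certificate :: cover_tree where
  "certificate =
    Split (Split (Split (Split (Split (Split (Split (Split (Split (Split (Split (Split Outside
    (Digits (-1, -1, -1, 0, -1))) (Split Outside (Split (Digits (-1, -1, -1, -1, 1)) Outside)))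
    (Split (Split (Digits (-1, -1, -1, 0, -1)) Outside) (Split (Split (Digits (-1, -1, -1, 0, -1))
    (Digits (-1, -1, -1, 0, 0))) (Split Outside (Split (Digits (-1, -1, -1, 0, 0)) Outside)))))
    (Split Outside (Split (Split (Digits (-1, -1, -1, 0, 0)) (Split (Split (Digits (-1, -1, -1, 0,
    0)) (Digits (-1, -1, 0, -1, -1))) (Split (Digits (-1, -1, -1, 0, 0)) (Digits (-1, -1, 0, -1,
    -1))))) (Split Outside (Digits (-1, -1, -1, 0, 1)))))) (Split Outside (Split (Split (Split
    (Digits (-1, -1, 0, -1, -1)) Outside) (Split (Digits (-1, -1, -1, 1, -1)) (Split Outside (Split
    (Split Outside (Digits (-1, -1, 0, -1, 0))) Outside)))) Outside))) (Split Outside (Split (Split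
    (Split (Digits (-1, -1, 0, -1, 0)) (Digits (-1, -1, -1, 1, 0))) (Split (Split (Split Outside
    (Split (Split (Split (Digits (-1, -1, 0, -1, 0)) Outside) (Split (Digits (-1, -1, 0, -1, 0))
    (Split Outside (Split (Digits (-1, -1, 0, -1, 0)) Outside)))) Outside)) Outside) (Split (Split
    (Split (Split (Split (Digits (-1, -1, 0, -1, 0)) (Split (Split (Digits (-1, -1, 0, -1, 0))
    (Split Outside (Digits (-1, -1, 0, 0, -1)))) (Digits (-1, -1, 0, 0, -1)))) (Digits (-1, -1, 0,
    0, -1))) (Split (Split (Split Outside (Digits (-1, -1, 0, 0, -1))) Outside) (Digits (-1, -1, 0,
    0, -1)))) (Digits (-1, -1, 0, 0, -1))) (Split Outside (Split (Digits (-1, -1, 0, 0, -1))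
    Outside))))) (Split Outside (Split (Split (Digits (-1, -1, 0, -1, 1)) (Split (Split (Digits
    (-1, -1, 0, 0, -1)) (Digits (-1, 0, -1, -1, -1))) (Split (Split (Digits (-1, -1, 0, 0, -1))
    (Digits (-1, -1, 0, 0, 0))) (Digits (-1, 0, -1, -1, -1))))) (Split Outside (Digits (-1, -1, 0,
    0, 0)))))))) (Split Outside (Split (Split Outside (Split (Split (Split (Digits (-1, 0, -1, -1,
    -1)) Outside) (Split (Split (Digits (-1, 0, -1, -1, -1)) (Digits (-1, -1, 1, -1, -1))) (Split
    Outside (Digits (-1, 0, -1, -1, 0))))) Outside)) Outside))) (Split (Split (Split Outside (Split
    (Split Outside (Split (Split Outside (Split (Digits (-1, -1, 0, 0, 0)) Outside)) Outside))
    Outside)) Outside) (Split (Split (Split (Split (Split (Digits (-1, -1, 1, -1, -1)) (Digits (-1,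
    -1, 0, 1, -1))) (Split (Split (Split Outside (Split (Digits (-1, 0, -1, -1, 0)) Outside))
    Outside) (Split (Digits (-1, 0, -1, 0, -1)) (Split Outside (Split (Digits (-1, 0, -1, 0, -1))
    Outside))))) (Split (Split (Split Outside (Digits (-1, -1, 0, 1, 0))) Outside) (Split (Split
    (Split (Digits (-1, 0, -1, -1, 1)) (Split (Digits (-1, -1, 0, 1, 0)) (Digits (-1, 0, -1, 0,
    0)))) (Split (Split (Digits (-1, 0, -1, 0, -1)) (Split (Split (Digits (-1, 0, -1, 0, -1))
    Outside) (Split (Digits (-1, 0, -1, 0, -1)) (Split (Split (Digits (-1, 0, -1, 0, -1)) Outside)
    (Split (Digits (-1, 0, -1, 0, -1)) (Split Outside (Digits (-1, 0, -1, 0, 0)))))))) (Digits (-1,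
    0, -1, 0, 0)))) (Split (Digits (-1, -1, 1, -1, 1)) (Digits (-1, -1, 1, 0, -1)))))) (Split
    Outside (Split (Split (Split (Split Outside (Split (Digits (-1, 0, -1, 0, 0)) Outside))
    Outside) (Split (Split (Split (Digits (-1, 0, -1, 0, 0)) (Split (Split (Digits (-1, 0, -1, 0,
    0)) Outside) (Digits (-1, 0, 0, -1, -1)))) (Split (Digits (-1, 0, -1, 0, 0)) (Digits (-1, 0, 0,
    -1, -1)))) (Split Outside (Digits (-1, 0, 0, -1, -1))))) Outside))) (Split (Split (Split
    Outside (Split (Split Outside (Split (Split (Digits (-1, -1, 0, 1, 1)) (Split (Digits (-1, -1,
    1, 0, -1)) (Digits (-1, 0, -1, 0, 1)))) (Digits (-1, -1, 1, 0, 0)))) Outside)) Outside) (Split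
    (Split (Split (Digits (-1, 0, -1, 1, -1)) (Split (Digits (-1, -1, 1, 0, 0)) (Digits (-1, 0, 0,
    -1, 0)))) (Split (Split (Split Outside (Split (Split (Split (Digits (-1, 0, 0, -1, -1)) (Digits
    (0, -1, -1, -1, -1))) (Split (Digits (-1, 0, 0, -1, -1)) (Digits (0, -1, -1, -1, -1)))) (Digits
    (0, -1, -1, -1, -1)))) Outside) (Split (Digits (-1, 0, 0, -1, 0)) (Split (Digits (0, -1, -1,
    -1, -1)) (Digits (0, -1, -1, -1, 0)))))) (Split (Split (Digits (-1, -1, 1, 0, 1)) (Split
    Outside (Split (Digits (-1, -1, 1, 0, 1)) Outside))) (Split (Split (Digits (-1, 0, -1, 1, 0))
    (Digits (0, -1, -1, -1, 0))) (Digits (-1, 0, 0, -1, 1))))))))) (Split Outside (Split (Split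
    Outside (Split (Split Outside (Split (Split (Split (Digits (0, -1, -1, -1, 0)) Outside) (Digits
    (0, -1, -1, -1, 1))) Outside)) Outside)) Outside))) (Split (Split (Split Outside (Split (Split
    Outside (Split (Split Outside (Split (Split (Digits (-1, -1, 1, 1, 0)) (Split (Split (Digits
    (-1, 0, -1, 1, 1)) (Digits (-1, 0, 0, 0, 0))) (Split (Digits (-1, 0, -1, 1, 1)) (Digits (-1, 0,
    0, 0, 0))))) (Split Outside (Digits (-1, -1, 1, 1, 1))))) Outside)) Outside)) Outside) (Split
    (Split (Split (Split (Split (Split (Split (Split (Digits (-1, 0, 0, 0, 0)) (Split (Digits (-1,
    1, -1, -1, -1)) (Split (Digits (-1, 0, 0, 0, 0)) (Digits (0, -1, -1, 0, 0))))) (Split (Split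
    (Digits (-1, 0, 0, 0, 0)) (Split (Split (Digits (-1, 0, 0, 0, 0)) (Digits (-1, 0, 0, 0, 1)))
    (Split (Digits (-1, 0, 0, 0, 0)) (Digits (-1, 0, 0, 0, 1))))) (Digits (-1, 0, 1, -1, -1))))
    (Split (Split (Split (Split (Digits (0, -1, -1, 0, -1)) Outside) (Digits (0, -1, -1, 0, 0)))
    Outside) (Split (Digits (-1, 1, -1, -1, 0)) (Split (Split (Digits (0, -1, -1, 0, 0)) Outside)
    (Digits (0, -1, 0, -1, -1)))))) (Split (Split (Digits (-1, 0, 0, 0, 1)) (Split Outside (Split
    (Split (Split (Digits (-1, 0, 0, 0, 1)) Outside) (Digits (-1, 0, 0, 1, 0))) (Split Outside
    (Digits (-1, 0, 0, 1, 0)))))) (Split (Split (Split (Digits (-1, 0, 1, -1, -1)) (Digits (-1, 0,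
    1, -1, 0))) (Digits (0, -1, -1, 1, -1))) (Digits (-1, 1, -1, -1, 1))))) (Split Outside (Split
    (Split (Split (Digits (0, -1, -1, 1, -1)) Outside) (Digits (0, -1, 0, -1, 0))) Outside)))
    (Split (Split (Split Outside (Split (Split (Split (Digits (-1, 0, 0, 1, 0)) (Split Outside
    (Digits (-1, 0, 1, -1, 1)))) (Digits (-1, 0, 1, -1, 1))) (Split Outside (Digits (-1, 0, 0, 1,
    1))))) (Split Outside (Split (Split Outside (Split (Digits (-1, 0, 0, 1, 1)) Outside))
    Outside))) (Split (Split (Split (Split (Digits (0, -1, -1, 1, 0)) (Split (Digits (0, -1, 0, -1,
    0)) (Digits (0, -1, 0, -1, 1)))) (Split (Split (Digits (-1, 0, 1, 0, -1)) (Digits (-1, 0, 1, 0,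
    0))) (Digits (0, -1, 0, -1, 1)))) (Split (Split (Split (Split (Split Outside (Digits (0, -1, 0,
    0, -1))) Outside) (Digits (0, -1, 0, 0, -1))) Outside) (Split (Digits (-1, 1, 0, -1, -1))
    (Digits (0, 0, -1, -1, -1))))) (Split (Split (Digits (-1, 0, 1, 0, 0)) (Split (Split (Split
    Outside (Split (Digits (-1, 0, 1, 0, 0)) (Split Outside (Digits (-1, 0, 1, 0, 1))))) Outside)
    (Digits (-1, 0, 1, 0, 1)))) (Split (Digits (0, -1, 0, 0, 0)) (Split (Digits (-1, 1, -1, 1, 0))
    (Split (Digits (0, -1, 0, 0, 0)) (Digits (0, -1, 0, 0, 1))))))))) (Split Outside (Split (Split
    Outside (Split (Split (Split (Split (Digits (0, 0, -1, -1, -1)) (Digits (0, 0, -1, -1, 0)))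
    Outside) (Digits (0, 0, -1, -1, 0))) Outside)) Outside))) (Split (Split (Split Outside (Split
    (Split (Split (Split Outside (Split (Digits (-1, 0, 1, 0, 1)) Outside)) Outside) (Split (Split
    (Split (Digits (-1, 0, 1, 1, -1)) (Split (Split (Digits (-1, 0, 1, 0, 1)) (Split Outside
    (Digits (-1, 0, 1, 1, 0)))) (Digits (-1, 1, -1, 1, 1)))) (Digits (-1, 1, 0, -1, 1))) (Split
    (Split (Split Outside (Digits (-1, 0, 1, 1, 0))) Outside) (Digits (-1, 0, 1, 1, 0))))) (Split
    Outside (Split (Split Outside (Split (Split Outside (Split (Digits (-1, 0, 1, 1, 0)) (Digits
    (-1, 0, 1, 1, 1)))) Outside)) Outside)))) Outside) (Split (Split (Split (Split (Split (Split
    (Digits (-1, 1, 0, 0, -1)) (Split (Split (Digits (0, -1, 0, 1, -1)) (Digits (0, 0, -1, 0, -1)))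
    (Digits (0, -1, 1, -1, 0)))) (Split (Split (Split (Digits (-1, 1, -1, 1, 1)) (Digits (0, -1, 1,
    -1, 0))) (Digits (-1, 1, 0, 0, 0))) (Digits (0, -1, 1, -1, 0)))) (Split (Split (Digits (0, 0,
    -1, 0, -1)) Outside) (Split (Digits (0, 0, -1, -1, 1)) (Split (Split (Digits (0, 0, -1, 0, -1))
    Outside) (Split (Split (Digits (0, 0, -1, 0, -1)) (Digits (0, 0, -1, 0, 0))) (Split (Split
    (Split (Split (Digits (0, 0, -1, 0, -1)) Outside) (Digits (0, 0, -1, 0, 0))) Outside) (Digits
    (0, 0, -1, 0, 0)))))))) (Split (Split (Digits (-1, 1, 0, 0, 0)) (Split (Digits (-1, 0, 1, 1,
    1)) (Digits (-1, 1, 0, 0, 1)))) (Split (Digits (0, -1, 1, 0, -1)) (Split (Digits (-1, 1, 0, 1,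
    -1)) (Split (Digits (-1, 1, 1, -1, -1)) (Digits (0, -1, 1, 0, 0))))))) (Split Outside (Split
    (Split (Split (Split (Split (Split (Split (Digits (0, 0, -1, 0, 0)) Outside) (Split (Digits (0,
    0, -1, 0, 0)) (Split (Split (Digits (0, 0, -1, 0, 0)) Outside) (Digits (0, 0, 0, -1, -1)))))
    Outside) (Digits (0, 0, 0, -1, -1))) Outside) (Digits (0, 0, 0, -1, -1))) Outside))) (Split
    (Split (Split (Split (Split Outside (Split (Digits (-1, 1, 0, 0, 1)) Outside)) Outside) (Split
    (Split (Split (Digits (-1, 1, 0, 0, 1)) (Split (Split (Split Outside (Split (Digits (-1, 1, 0,
    0, 1)) (Split Outside (Digits (-1, 1, 0, 1, 0))))) Outside) (Digits (-1, 1, 0, 1, 0)))) (Digits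
    (-1, 1, 1, -1, 0))) (Split (Split (Split Outside (Digits (-1, 1, 0, 1, 0))) Outside) (Digits
    (-1, 1, 0, 1, 0))))) (Split Outside (Split (Split Outside (Split (Split Outside (Digits (-1, 1,
    1, -1, 1))) Outside)) Outside))) (Split (Split (Split (Split (Digits (0, 0, -1, 0, 1)) (Digits
    (0, 0, 0, -1, 0))) (Digits (-1, 1, 1, 0, -1))) (Split (Split (Split (Digits (1, -1, -1, -1,
    -1)) (Split (Digits (0, 0, 0, -1, 0)) (Split (Split (Digits (0, 0, 0, -1, 0)) (Digits (1, -1,
    -1, -1, 0))) (Split (Digits (0, 0, 0, -1, 0)) (Digits (1, -1, -1, -1, 0)))))) (Split Outside
    (Digits (1, -1, -1, -1, 0)))) (Split (Split (Split (Digits (0, 0, 0, -1, 0)) (Split (Split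
    (Digits (0, 0, 0, -1, 0)) (Digits (1, -1, -1, -1, 0))) (Split (Digits (0, 0, 0, -1, 0)) (Digits
    (1, -1, -1, -1, 0))))) (Digits (0, 0, 0, 0, -1))) (Digits (1, -1, -1, -1, 0))))) (Split (Split
    (Split (Digits (-1, 1, 0, 1, 1)) (Split (Digits (-1, 1, 1, 0, -1)) (Digits (0, -1, 1, 1, 0))))
    (Split (Split (Digits (-1, 1, 0, 1, 1)) Outside) (Digits (-1, 1, 1, 0, 0)))) (Split (Digits (0,
    0, 0, 0, -1)) (Split (Digits (0, 0, -1, 1, 1)) (Split (Split (Digits (0, 0, 0, -1, 1)) (Digits
    (1, -1, -1, -1, 1))) (Digits (0, 0, 0, 0, 0))))))))))))) (Split Outside (Split (Split Outside
    (Split (Split Outside (Split (Split (Split (Split Outside (Split (Digits (1, -1, -1, -1, 0))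
    Outside)) Outside) (Split (Split (Split (Split (Split (Split (Digits (1, -1, -1, -1, 0))
    (Digits (1, -1, -1, -1, 1))) (Digits (1, -1, -1, 0, -1))) (Digits (1, -1, -1, -1, 1))) (Digits
    (1, -1, -1, 0, -1))) (Split (Digits (1, -1, -1, -1, 1)) (Split (Digits (1, -1, -1, 0, -1))
    (Split (Digits (1, -1, -1, -1, 1)) (Split (Digits (0, 1, -1, -1, -1)) (Digits (1, -1, -1, 0,
    0))))))) (Split Outside (Split (Split Outside (Split (Split Outside (Digits (1, -1, -1, 0, 0)))
    Outside)) Outside)))) Outside)) Outside)) Outside))) (Split (Split (Split Outside (Split (Split
    Outside (Split (Split Outside (Split (Split (Split (Split Outside (Split (Split Outside (Split
    (Digits (-1, 1, 1, 0, 0)) Outside)) Outside)) Outside) (Split (Split (Split (Split (Split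
    (Digits (-1, 1, 1, 0, 0)) (Digits (0, -1, 1, 1, 1))) (Digits (-1, 1, 1, 1, -1))) (Digits (-1,
    1, 1, 0, 1))) (Digits (-1, 1, 1, 1, -1))) (Split (Digits (-1, 1, 1, 0, 1)) (Split (Digits (-1,
    1, 1, 1, -1)) (Split (Digits (-1, 1, 1, 0, 1)) (Split (Digits (-1, 1, 1, 1, -1)) (Digits (-1,
    1, 1, 1, 0)))))))) (Split Outside (Split (Split Outside (Digits (-1, 1, 1, 1, 0))) Outside))))
    Outside)) Outside)) Outside) (Split (Split (Split (Split (Split (Split (Split (Split (Split
    (Split (Split (Digits (0, 0, 0, 0, 0)) (Split (Digits (-1, 1, 1, 1, -1)) (Digits (0, 0, 0, 1,
    -1)))) (Digits (0, 0, 1, -1, -1))) (Digits (0, 0, 0, 0, 1))) (Split (Split (Digits (1, -1, -1,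
    0, 0)) (Split Outside (Digits (1, -1, 0, -1, -1)))) (Split (Split (Digits (0, 1, -1, -1, 0))
    (Digits (1, -1, -1, 0, 1))) (Digits (1, -1, 0, -1, -1))))) (Split (Split (Split (Digits (-1, 1,
    1, 1, 0)) (Split (Digits (0, 0, 0, 0, 1)) (Split (Split (Split (Digits (-1, 1, 1, 1, 0))
    (Digits (0, 0, 0, 1, 0))) (Split (Digits (-1, 1, 1, 1, 0)) (Digits (0, 0, 0, 1, 0)))) (Digits
    (0, 0, 0, 1, 0))))) (Split (Split (Digits (-1, 1, 1, 1, 0)) Outside) (Split (Split (Split
    (Split (Digits (-1, 1, 1, 1, 0)) (Digits (0, 0, 0, 1, 0))) (Split (Digits (-1, 1, 1, 1, 0))
    (Digits (0, 0, 0, 1, 0)))) (Digits (0, 0, 0, 1, 0))) (Digits (-1, 1, 1, 1, 1))))) (Split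
    (Digits (1, -1, -1, 0, 1)) (Split (Digits (0, 0, 0, 1, 0)) (Digits (0, 0, 1, 0, -1)))))) (Split
    (Split (Split Outside (Split (Split Outside (Split (Digits (1, -1, -1, 1, -1)) Outside))
    Outside)) Outside) (Split (Split (Split (Digits (1, -1, 0, -1, 0)) (Split Outside (Split
    (Digits (1, -1, 0, -1, 0)) Outside))) (Split (Digits (1, -1, -1, 1, 0)) (Split (Split (Digits
    (1, -1, 0, -1, 0)) (Split Outside (Split (Split (Split (Digits (1, -1, 0, -1, 0)) Outside)
    (Digits (1, -1, 0, 0, -1))) Outside))) (Digits (1, -1, 0, 0, -1))))) (Split Outside (Split
    (Split Outside (Digits (1, -1, 0, 0, -1))) Outside))))) (Split (Split (Split Outside (Split
    (Digits (0, 0, 0, 1, 1)) (Split Outside (Split (Digits (0, 0, 0, 1, 1)) (Split Outside (Split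
    (Split (Split (Digits (0, 0, 0, 1, 1)) (Split Outside (Digits (0, 0, 1, 0, 0)))) (Digits (0, 0,
    1, 0, 0))) (Split Outside (Digits (0, 0, 1, 0, 0))))))))) Outside) (Split (Split (Split (Split
    (Split (Digits (0, 1, -1, 0, 0)) (Digits (1, -1, -1, 1, 1))) (Digits (1, -1, 0, -1, 1)))
    (Digits (0, 1, -1, 0, 1))) (Split (Split (Digits (1, -1, 0, 0, -1)) (Digits (1, 0, -1, -1,
    -1))) (Digits (1, -1, 0, 0, 0)))) (Split (Split (Split (Split (Split (Split (Digits (0, 0, 1,
    0, 0)) (Split Outside (Split (Digits (0, 0, 1, 0, 0)) (Split Outside (Digits (0, 0, 1, 0,
    1)))))) (Split (Digits (0, 0, 1, 0, 0)) (Digits (0, 0, 1, 0, 1)))) (Split Outside (Digits (0,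
    0, 1, 0, 1)))) (Digits (0, 0, 1, 1, -1))) (Split Outside (Digits (0, 0, 1, 0, 1)))) (Split
    (Split (Digits (0, 1, -1, 1, 0)) (Split (Digits (1, -1, 0, 0, 0)) (Split (Digits (0, 1, -1, 1,
    0)) (Digits (1, -1, 1, -1, -1))))) (Split (Split (Digits (0, 1, -1, 1, 0)) (Split (Digits (0,
    0, 1, 0, 1)) (Digits (0, 1, 0, -1, 1)))) (Digits (1, -1, 0, 0, 1)))))))) (Split Outside (Split
    (Split (Split (Split Outside (Split (Split Outside (Split (Split (Digits (1, 0, -1, -1, -1))
    (Digits (1, 0, -1, -1, 0))) Outside)) Outside)) Outside) (Split (Split (Split (Digits (1, 0,
    -1, -1, 0)) (Split Outside (Split (Digits (1, 0, -1, -1, 0)) Outside))) (Split (Digits (1, -1,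
    0, 1, -1)) (Split (Split (Digits (1, -1, 1, -1, -1)) (Split (Split (Digits (1, 0, -1, -1, 0))
    Outside) (Digits (1, 0, -1, 0, -1)))) (Digits (1, 0, -1, -1, 1))))) (Split Outside (Split
    (Split Outside (Digits (1, 0, -1, 0, -1))) Outside)))) Outside))) (Split (Split (Split Outside
    (Split (Split Outside (Split (Digits (0, 0, 1, 1, 0)) (Split Outside (Split (Digits (0, 0, 1,
    1, 0)) (Digits (0, 0, 1, 1, 1)))))) Outside)) Outside) (Split (Split (Split (Split (Split
    (Split (Split (Digits (0, 1, 0, 0, -1)) (Digits (0, 1, 0, 0, 0))) (Digits (1, -1, 1, -1, 0)))
    (Digits (0, 1, 0, 0, 0))) (Split (Split (Digits (1, 0, -1, 0, -1)) (Split Outside (Split (Split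
    (Split (Digits (1, 0, -1, 0, -1)) Outside) (Digits (1, 0, -1, 0, 0))) Outside))) (Digits (1, 0,
    -1, 0, 0)))) (Split (Split (Split (Digits (0, 0, 1, 1, 1)) (Digits (1, -1, 0, 1, 1))) (Split
    Outside (Split (Digits (0, 1, 0, 0, 1)) (Split Outside (Split (Digits (0, 1, 0, 0, 1))
    Outside))))) (Split (Split (Digits (0, 1, 0, 1, -1)) (Split (Digits (1, 0, -1, 0, 0)) (Digits
    (1, 0, -1, 0, 1)))) (Split (Split (Digits (0, 1, 0, 1, -1)) (Digits (0, 1, 0, 1, 0))) (Digits
    (0, 1, 1, -1, 0)))))) (Split (Split (Split Outside (Split (Split Outside (Digits (1, 0, 0, -1,
    -1))) Outside)) Outside) (Split (Split (Split (Digits (1, 0, 0, -1, -1)) Outside) (Split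
    (Digits (1, 0, -1, 1, -1)) (Split (Split (Digits (1, 0, -1, 1, -1)) Outside) (Digits (1, 0, 0,
    -1, 0))))) Outside))) (Split (Split (Split Outside (Split (Digits (0, 1, 0, 1, 0)) (Split
    Outside (Digits (0, 1, 1, -1, 1))))) Outside) (Split (Split (Split (Digits (1, -1, 1, 1, -1))
    (Split (Digits (0, 1, 1, -1, 1)) (Split (Digits (1, 0, -1, 1, 0)) (Digits (1, 0, -1, 1, 1)))))
    (Split (Split (Split (Split (Digits (1, 0, 0, -1, 0)) Outside) (Split (Digits (1, 0, 0, -1, 0))
    (Split Outside (Digits (1, 0, 0, 0, -1))))) Outside) (Digits (1, 0, 0, 0, -1)))) (Split (Split
    (Split (Split (Digits (0, 1, 0, 1, 1)) (Split Outside (Digits (0, 1, 1, 0, 0)))) (Digits (1,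
    -1, 1, 1, 0))) (Split Outside (Split (Digits (0, 1, 1, 0, 0)) (Split Outside (Digits (0, 1, 1,
    0, 1)))))) (Split (Split (Digits (1, 0, -1, 1, 1)) (Split (Split (Split (Digits (1, 0, 0, 0,
    -1)) (Digits (1, 0, 0, 0, 0))) (Split (Digits (1, 0, 0, 0, -1)) (Digits (1, 0, 0, 0, 0))))
    (Digits (1, 0, 0, 0, 0)))) (Split (Split (Split (Digits (0, 1, 1, 0, 0)) (Digits (1, 0, 0, 0,
    0))) (Digits (1, -1, 1, 1, 1))) (Digits (1, 0, 0, 0, 0)))))))))) (Split Outside (Split (Split
    Outside (Split (Split Outside (Split (Split (Split (Digits (1, 1, -1, -1, -1)) Outside) (Split
    (Split (Split (Digits (1, 0, 0, 0, 0)) (Digits (1, 0, 1, -1, -1))) (Split (Digits (1, 0, 0, 0,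
    0)) (Digits (1, 0, 1, -1, -1)))) (Digits (1, 1, -1, -1, 0)))) Outside)) Outside)) Outside)))
    (Split (Split (Split Outside (Split (Split Outside (Split (Split Outside (Split (Digits (0, 1,
    1, 1, -1)) (Split Outside (Digits (0, 1, 1, 1, 0))))) Outside)) Outside)) Outside) (Split
    (Split (Split (Split (Split (Split (Split (Digits (1, 0, 0, 1, -1)) (Split (Digits (0, 1, 1, 1,
    0)) (Digits (1, 0, 1, -1, 0)))) (Split (Split (Split Outside (Digits (1, 1, -1, 0, -1)))
    Outside) (Digits (1, 1, -1, 0, -1)))) (Split (Split (Split (Split (Digits (0, 1, 1, 1, 0))
    (Digits (0, 1, 1, 1, 1))) (Digits (1, 0, 0, 1, 0))) (Split Outside (Split (Split (Digits (0, 1,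
    1, 1, 1)) (Split (Split (Digits (0, 1, 1, 1, 1)) (Digits (1, 0, 0, 1, 1))) (Split (Digits (0,
    1, 1, 1, 1)) (Digits (1, 0, 0, 1, 1))))) Outside))) (Split (Split (Digits (1, 0, 0, 1, 0))
    (Digits (1, 1, -1, 0, 0))) (Digits (1, 0, 1, -1, 1))))) (Split Outside (Split (Split Outside
    (Split (Split (Digits (1, 1, -1, 0, 0)) (Split (Split (Digits (1, 0, 1, 0, -1)) (Digits (1, 1,
    -1, 0, 1))) (Digits (1, 1, 0, -1, -1)))) Outside)) Outside))) (Split (Split (Split Outside
    (Split (Split (Split (Digits (1, 0, 0, 1, 1)) Outside) (Split (Split (Digits (1, 0, 0, 1, 1))
    (Digits (1, 0, 1, 0, 0))) (Split (Split (Digits (1, 0, 0, 1, 1)) (Split Outside (Digits (1, 0,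
    1, 0, 0)))) (Digits (1, 0, 1, 0, 0))))) (Split Outside (Split (Split Outside (Digits (1, 0, 1,
    0, 0))) Outside)))) Outside) (Split (Split (Split (Split (Digits (1, 1, -1, 0, 1)) (Digits (1,
    1, -1, 1, -1))) (Split (Split (Digits (1, 0, 1, 0, 0)) (Split (Split (Split (Split (Split
    (Split (Digits (1, 0, 1, 0, 0)) Outside) (Digits (1, 0, 1, 0, 1))) (Split Outside (Digits (1,
    0, 1, 0, 1)))) (Digits (1, 0, 1, 0, 1))) (Split Outside (Digits (1, 0, 1, 0, 1)))) (Digits (1,
    0, 1, 0, 1)))) (Split (Split (Digits (1, 0, 1, 0, 0)) (Digits (1, 1, 0, -1, 0))) (Digits (1, 0,
    1, 1, -1))))) (Split Outside (Split (Digits (1, 1, 0, -1, 0)) Outside))) (Split (Split (Split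
    (Split (Split Outside (Digits (1, 0, 1, 0, 1))) Outside) (Digits (1, 0, 1, 0, 1))) (Split
    Outside (Split (Split Outside (Digits (1, 0, 1, 1, 0))) Outside))) (Split (Digits (1, 1, 0, -1,
    1)) (Digits (1, 1, -1, 1, 1))))))) (Split Outside (Split (Split Outside (Split (Split Outside
    (Split (Split Outside (Digits (1, 1, 0, 0, 0))) Outside)) Outside)) Outside))) (Split (Split
    (Split Outside (Split (Split Outside (Split (Split (Split (Digits (1, 0, 1, 1, 0)) Outside)
    (Split (Digits (1, 1, -1, 1, 1)) (Digits (1, 0, 1, 1, 1)))) (Split Outside (Digits (1, 0, 1, 1,
    1))))) Outside)) Outside) (Split (Split (Split (Split (Split (Split (Digits (1, 1, 0, 0, 0))
    Outside) (Split (Split (Split (Digits (1, 0, 1, 1, 1)) (Split (Digits (1, 1, 0, 0, 0)) (Digits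
    (1, 1, 0, 0, 1)))) (Split (Digits (1, 0, 1, 1, 1)) (Digits (1, 1, 0, 0, 1)))) (Digits (1, 1, 0,
    1, -1)))) Outside) (Split (Split (Split (Split (Split Outside (Digits (1, 1, 0, 0, 1)))
    Outside) (Split (Digits (1, 1, 0, 0, 1)) (Split (Split (Digits (1, 1, 0, 0, 1)) (Split Outside
    (Split (Digits (1, 1, 0, 0, 1)) Outside))) (Split (Digits (1, 1, 0, 0, 1)) (Split (Split
    (Digits (1, 1, 0, 0, 1)) (Split (Split (Digits (1, 1, 0, 0, 1)) Outside) (Digits (1, 1, 0, 1,
    0)))) (Digits (1, 1, 0, 1, 0))))))) (Split Outside (Split (Split Outside (Split (Split (Split
    (Split Outside (Digits (1, 1, 0, 1, 0))) Outside) (Digits (1, 1, 0, 1, 0))) (Split Outside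
    (Digits (1, 1, 0, 1, 0))))) Outside))) (Split (Digits (1, 1, 1, -1, 0)) (Digits (1, 1, 0, 1,
    0))))) Outside) (Split (Split (Split Outside (Split (Split (Split (Split Outside (Split (Digits
    (1, 1, 0, 1, 0)) Outside)) Outside) (Digits (1, 1, 1, -1, 1))) (Split Outside (Digits (1, 1, 0,
    1, 1))))) Outside) (Split (Split (Split (Split (Digits (1, 1, 1, 0, -1)) Outside) (Split (Split
    (Split (Digits (1, 1, 0, 1, 1)) (Digits (1, 1, 1, 0, 0))) (Split (Digits (1, 1, 0, 1, 1))
    (Digits (1, 1, 1, 0, 0)))) (Digits (1, 1, 1, 0, 0)))) Outside) (Split (Split (Split (Split
    (Split Outside (Digits (1, 1, 1, 0, 0))) Outside) (Split (Digits (1, 1, 1, 0, 0)) (Digits (1,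
    1, 1, 0, 1)))) (Split Outside (Digits (1, 1, 1, 0, 1)))) (Split (Split (Split Outside (Digits
    (1, 1, 1, 1, -1))) Outside) (Split (Digits (1, 1, 1, 0, 1)) Outside)))))))))))"

lemma cover_check_certificate: "cover_check certificate (-31744) 31744 (-25600) 25600"
  unfolding certificate_def by code_simp

lemma covered_Tinv5_pq:
  assumes "max_norm w \<le> 1"
  shows "covered (Tinv5_pq w)"
proof (rule cover_check_sound[OF cover_check_certificate _ assms])
  show "Tinv5_pq w \<in> grid_box (-31744) 31744 (-25600) 25600"
    using Tinv5_pq_bounds[OF assms] by (simp add: grid_box_def)
qed

lemma of_int_in_digit_set:
  fixes u :: int
  assumes "\<bar>u\<bar> \<le> 1"
  shows "real_of_int u \<in> {-1, 0, 1}"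
  using assms by (cases "u = -1 \<or> u = 0 \<or> u = 1") auto

lemma Uset_subset_images:
  "Uset \<subseteq> (\<Union>u1\<in>{-1,0,1}. \<Union>u2\<in>{-1,0,1}. \<Union>u3\<in>{-1,0,1}. \<Union>u4\<in>{-1,0,1}. \<Union>u5\<in>{-1,0,1}.
              (affT u1 \<circ> affT u2 \<circ> affT u3 \<circ> affT u4 \<circ> affT u5) ` Vset)"
proof
  fix x assume "x \<in> Uset"
  then have "covered (Tinv5_pq (pq_coords x))"
    using Uset_subset_pq_square covered_Tinv5_pq by blast
  then obtain u1 u2 u3 u4 u5 where u: "digits_ok (u1, u2, u3, u4, u5)"
    and close: "max_norm (Tinv5_pq (pq_coords x) - tau (u1, u2, u3, u4, u5)) < 0.95"
    unfolding covered_def by auto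
  define y where "y = inv_branch (u1, u2, u3, u4, u5) x"
  have "max_norm (pq_coords y) < 0.95"
    using close by (simp only: y_def pq_coords_inv_branch)
  then have "y \<in> Vset"
    using pq_square_subset_Vset by blast
  moreover have "x = (affT u1 \<circ> affT u2 \<circ> affT u3 \<circ> affT u4 \<circ> affT u5) y"
    unfolding y_def by (rule affT_comp_inv_branch[symmetric])
  ultimately have x: "x \<in> (affT u1 \<circ> affT u2 \<circ> affT u3 \<circ> affT u4 \<circ> affT u5) ` Vset"
    by (simp only: imageI)
  have "\<bar>u1\<bar> \<le> 1" "\<bar>u2\<bar> \<le> 1" "\<bar>u3\<bar> \<le> 1" "\<bar>u4\<bar> \<le> 1" "\<bar>u5\<bar> \<le> 1"
    using u by simp_all
  note digits = this[THEN of_int_in_digit_set]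
  show "x \<in> (\<Union>u1\<in>{-1,0,1}. \<Union>u2\<in>{-1,0,1}. \<Union>u3\<in>{-1,0,1}. \<Union>u4\<in>{-1,0,1}.
      \<Union>u5\<in>{-1,0,1}. (affT u1 \<circ> affT u2 \<circ> affT u3 \<circ> affT u4 \<circ> affT u5) ` Vset)"
    by (rule UN_I[OF digits(1)], rule UN_I[OF digits(2)], rule UN_I[OF digits(3)],
        rule UN_I[OF digits(4)], rule UN_I[OF digits(5)], rule x)
qed

lemma v_in_Vset:
  "Tinv_pow 1 bvec - Tinv_pow 2 bvec - Tinv_pow 3 bvec - Tinv_pow 4 bvec + Tinv_pow 5 bvec \<in> Vset"
proof -
  have "Tinv_pow 1 bvec - Tinv_pow 2 bvec - Tinv_pow 3 bvec - Tinv_pow 4 bvec + Tinv_pow 5 bvec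
      = vector [17 * sqrt 2 - 27, 3 * sqrt 2 - 6]"
    by (simp add: Tinv_pow_eq numeral_eq_Suc Tinv_mult_vector bvec_def vec_eq_iff forall_2
        sqrt2_mult_sqrt2 field_simps)
  moreover have "pq_coords (vector [17 * sqrt 2 - 27, 3 * sqrt 2 - 6])
      = ((150 - 138 * sqrt 2) / 49, (2190 - 1466 * sqrt 2) / 245)"
    by (simp add: pq_coords_def field_simps)
  moreover have "max_norm ((150 - 138 * sqrt 2) / 49, (2190 - 1466 * sqrt 2) / 245) < 0.95"
    using sqrt2_bounds by (simp add: max_norm_def abs_less_iff)
  ultimately show ?thesis
    using pq_square_subset_Vset by auto
qed

theorem lemma4p2:
  shows "Tinv_pow 1 bvec - Tinv_pow 2 bvec - Tinv_pow 3 bvec - Tinv_pow 4 bvec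
           + Tinv_pow 5 bvec \<in> Vset
         \<and> Uset \<subseteq> (\<Union>u1\<in>{-1,0,1}. \<Union>u2\<in>{-1,0,1}. \<Union>u3\<in>{-1,0,1}. \<Union>u4\<in>{-1,0,1}.
                      \<Union>u5\<in>{-1,0,1}.
                        (affT u1 \<circ> affT u2 \<circ> affT u3 \<circ> affT u4 \<circ> affT u5) ` Vset)"
  by (rule conjI[OF v_in_Vset Uset_subset_images])

end
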